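(* Let $X\subset\mathbb C^s$ be a finite nonempty set and let $A\subset\Gamma=\mathbb N_0^s$ be a finite set such that $\Pi_A$ is a degree reducing interpolation space for $X$. Let $L_A:\Pi\to\Pi_A$ be the interpolation operator, i.e. $L_Ap$ is the unique element of $\Pi_A$ with $(L_Ap)(x)=p(x)$ for all $x\in X$. Then the polynomials \[ q_\alpha(x):=x^\alpha-(L_A(\cdot)^\alpha)(x),\qquad \alpha\in\partial A, \] form an H-basis of the ideal $I_X=\{p\in\Pi:p(x)=0\ \forall x\in X\}$.
   Context: $\Pi=\mathbb C[x_1,\dots,x_s]$, $\deg$ is total degree with $\deg 0<0$. For $A\subset\Gamma$, $\Pi_A$ is the span of $x^\alpha$, $\alpha\in A$. A subspace $\mathcal P\subseteq\Pi$ is a degree reducing interpolation space for $X$ if for every $q\in\Pi$ there is exactly one $p\in\mathcal P$ with $p(x)=q(x)$ for all $x\in X$, and this $p$ satisfies $\deg p\le\deg q$. The border of a finite $A\subset\Gamma$ is $\partial A=\big(\bigcup_{j=1}^s(A+\epsilon_j)\big)\setminus A$, where $\epsilon_j$ is the $j$-th unit multiindex. A finite set $H\subset I$ of an ideal $I\subseteq\Pi$ is an H-basis of $I$ if every $q\in I$ can be written as $q=\sum_{h\in H}g_h h$ with $g_h\in\Pi$ and $\deg g_h+\deg h\le\deg q$ for all $h$ (terms with $g_h=0$ being allowed). *)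

theory Defs
  imports Complex_Main "HOL-Library.Poly_Mapping"
begin

text \<open>Multivariate polynomials over the complex numbers in s = CARD('n) variables,
  represented as finitely supported maps from multiindices to coefficients.
  Multiplication is the convolution product of Poly_Mapping.\<close>

type_synonym 'n mpoly = "('n \<Rightarrow>\<^sub>0 nat) \<Rightarrow>\<^sub>0 complex"

definition monom :: "('n \<Rightarrow>\<^sub>0 nat) \<Rightarrow> 'n mpoly" where
  "monom \<alpha> = Poly_Mapping.single \<alpha> 1"

definition eval :: "('n::finite) mpoly \<Rightarrow> ('n \<Rightarrow> complex) \<Rightarrow> complex" where
  "eval p x = (\<Sum>a\<in>Poly_Mapping.keys p. Poly_Mapping.lookup p a * (\<Prod>i\<in>UNIV. x i ^ Poly_Mapping.lookup (a::'n \<Rightarrow>\<^sub>0 nat) i))"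

definition mdeg :: "('n::finite \<Rightarrow>\<^sub>0 nat) \<Rightarrow> nat" where
  "mdeg \<alpha> = (\<Sum>i\<in>UNIV. Poly_Mapping.lookup \<alpha> i)"

definition deg :: "('n::finite) mpoly \<Rightarrow> int" where
  "deg p = (if p = 0 then -1 else int (Max (mdeg ` Poly_Mapping.keys p)))"

definition span_mon :: "('n \<Rightarrow>\<^sub>0 nat) set \<Rightarrow> 'n mpoly set" where
  "span_mon A = {p. Poly_Mapping.keys p \<subseteq> A}"

definition interpolates :: "('n::finite) mpoly \<Rightarrow> 'n mpoly \<Rightarrow> ('n \<Rightarrow> complex) set \<Rightarrow> bool" where
  "interpolates p q X \<longleftrightarrow> (\<forall>x\<in>X. eval p x = eval q x)"

definition deg_reducing_interp_space :: "('n::finite) mpoly set \<Rightarrow> ('n \<Rightarrow> complex) set \<Rightarrow> bool" where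
  "deg_reducing_interp_space P X \<longleftrightarrow>
     (\<forall>q. \<exists>!p. p \<in> P \<and> interpolates p q X) \<and>
     (\<forall>q p. p \<in> P \<and> interpolates p q X \<longrightarrow> deg p \<le> deg q)"

definition interp_op :: "('n \<Rightarrow>\<^sub>0 nat) set \<Rightarrow> ('n::finite \<Rightarrow> complex) set \<Rightarrow> 'n mpoly \<Rightarrow> 'n mpoly" where
  "interp_op A X q = (THE p. p \<in> span_mon A \<and> interpolates p q X)"

definition border :: "('n \<Rightarrow>\<^sub>0 nat) set \<Rightarrow> ('n \<Rightarrow>\<^sub>0 nat) set" where
  "border A = (\<Union>j. (\<lambda>\<alpha>. \<alpha> + Poly_Mapping.single j 1) ` A) - A"

definition vanishing_ideal :: "('n::finite \<Rightarrow> complex) set \<Rightarrow> 'n mpoly set" where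
  "vanishing_ideal X = {p. \<forall>x\<in>X. eval p x = 0}"

definition is_H_basis :: "('n::finite) mpoly set \<Rightarrow> 'n mpoly set \<Rightarrow> bool" where
  "is_H_basis H I \<longleftrightarrow> finite H \<and> H \<subseteq> I \<and>
     (\<forall>q\<in>I. \<exists>g. q = (\<Sum>h\<in>H. g h * h) \<and>
        (\<forall>h\<in>H. g h \<noteq> 0 \<longrightarrow> deg (g h) + deg h \<le> deg q))"

end

(* Call p representable at level k if p = (\<Sum>h\<in>H. g h * h) + r with r \<in> \<Pi>_A, deg r \<le> k and
   deg (g h) + deg h \<le> k.  Such representations are closed under sums and scalar multiples, and
   multiplication by a variable x_j raises the level by one: x_j x^\<gamma> for \<gamma> \<in> A is either again in
   \<Pi>_A or a border monomial x^\<beta> = q_\<beta> + L_A x^\<beta>, where deg L_A x^\<beta> \<le> |\<beta>| by degree reduction.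
   Since 1 = L_A 1 \<in> \<Pi>_A, every polynomial q is representable at level deg q.  If q vanishes on X,
   so does the remainder r \<in> \<Pi>_A, which is then 0 by uniqueness of interpolation. *)

theory Submission
  imports Defs
begin

definition powprod :: "('n::finite \<Rightarrow>\<^sub>0 nat) \<Rightarrow> ('n \<Rightarrow> complex) \<Rightarrow> complex" where
  "powprod a x = (\<Prod>i\<in>UNIV. x i ^ Poly_Mapping.lookup a i)"

lemma powprod_add: "powprod (a + b) x = powprod a x * powprod b x"
  by (simp add: powprod_def lookup_add power_add prod.distrib)

lemma eval_conv_powprod:
  "eval p x = (\<Sum>a\<in>Poly_Mapping.keys p. Poly_Mapping.lookup p a * powprod a x)"
  by (simp add: eval_def powprod_def)

lemma eval_zero [simp]: "eval 0 x = 0"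
  by (simp add: eval_def)

lemma eval_single: "eval (Poly_Mapping.single a c) x = c * powprod a x"
  by (simp add: eval_conv_powprod)

lemma eval_one: "eval 1 x = 1"
  by (simp add: eval_conv_powprod powprod_def)

lemma eval_add: "eval (p + q) x = eval p x + eval q x"
  using setsum_keys_plus_distrib[of "\<lambda>a c. c * powprod a x" p q]
  by (simp add: eval_conv_powprod distrib_right)

lemma eval_uminus: "eval (- p) x = - eval p x"
  by (simp add: eval_conv_powprod sum_negf)

lemma eval_diff: "eval (p - q) x = eval p x - eval q x"
  by (metis diff_conv_add_uminus eval_add eval_uminus)

lemma eval_sum: "eval (sum f S) x = (\<Sum>s\<in>S. eval (f s) x)"
  by (induction S rule: infinite_finite_induct) (auto simp: eval_add)

lemma sum_single_lookup:
  "(\<Sum>a\<in>Poly_Mapping.keys p. Poly_Mapping.single a (Poly_Mapping.lookup p a)) = p"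
  by (rule poly_mapping_eqI) (auto simp: lookup_sum lookup_single when_def in_keys_iff)

lemma eval_mult: "eval (p * q) x = eval p x * eval q x"
proof -
  have "p * q = (\<Sum>a\<in>Poly_Mapping.keys p. \<Sum>b\<in>Poly_Mapping.keys q.
      Poly_Mapping.single a (Poly_Mapping.lookup p a) * Poly_Mapping.single b (Poly_Mapping.lookup q b))"
    by (subst (1 2) sum_single_lookup[symmetric])
       (simp add: sum_distrib_left sum_distrib_right sum.swap[of _ "Poly_Mapping.keys q"])
  then have "eval (p * q) x = (\<Sum>a\<in>Poly_Mapping.keys p. \<Sum>b\<in>Poly_Mapping.keys q.
      Poly_Mapping.lookup p a * powprod a x * (Poly_Mapping.lookup q b * powprod b x))"
    by (simp add: eval_sum mult_single eval_single powprod_add mult_ac)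
  also have "\<dots> = eval p x * eval q x"
    by (simp add: eval_conv_powprod sum_product)
  finally show ?thesis .
qed

lemma mdeg_add: "mdeg (a + b) = mdeg a + mdeg b"
  by (simp add: mdeg_def lookup_add sum.distrib)

lemma mdeg_zero [simp]: "mdeg (0::'n::finite \<Rightarrow>\<^sub>0 nat) = 0"
  by (simp add: mdeg_def)

lemma mdeg_single_one [simp]: "mdeg (Poly_Mapping.single (j::'n::finite) (Suc 0)) = 1"
  by (simp add: mdeg_def lookup_single when_def)

lemma mdeg_eq_0_iff: "mdeg (a::'n::finite \<Rightarrow>\<^sub>0 nat) = 0 \<longleftrightarrow> a = 0"
  by (auto simp: mdeg_def poly_mapping_eq_iff fun_eq_iff)

lemma deg_ge_minus_one: "deg p \<ge> -1"
  by (simp add: deg_def)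

lemma mdeg_le_deg: "a \<in> Poly_Mapping.keys p \<Longrightarrow> int (mdeg a) \<le> deg p"
  by (auto simp: deg_def)

lemma deg_leI:
  assumes "\<And>a. a \<in> Poly_Mapping.keys p \<Longrightarrow> int (mdeg a) \<le> m" and "m \<ge> -1"
  shows "deg p \<le> m"
proof (cases "p = 0")
  case False
  then have "Max (mdeg ` Poly_Mapping.keys p) \<in> mdeg ` Poly_Mapping.keys p"
    by (intro Max_in) auto
  then obtain a where "a \<in> Poly_Mapping.keys p" "Max (mdeg ` Poly_Mapping.keys p) = mdeg a"
    by blast
  then show ?thesis using False assms(1)[of a] by (simp add: deg_def)
qed (simp add: deg_def assms(2))

lemma deg_mono_keys: "Poly_Mapping.keys p \<subseteq> Poly_Mapping.keys q \<Longrightarrow> deg p \<le> deg q"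
  by (rule deg_leI) (auto intro: mdeg_le_deg deg_ge_minus_one)

lemma deg_add_le: "deg p \<le> m \<Longrightarrow> deg q \<le> m \<Longrightarrow> deg (p + q) \<le> m"
proof (rule deg_leI)
  fix a assume "deg p \<le> m" "deg q \<le> m" "a \<in> Poly_Mapping.keys (p + q)"
  then show "int (mdeg a) \<le> m"
    using keys_add[of p q] mdeg_le_deg[of a p] mdeg_le_deg[of a q] by auto
qed (use deg_ge_minus_one[of p] in simp)

lemma deg_mult_le:
  assumes "p \<noteq> 0" "q \<noteq> 0"
  shows "deg (p * q) \<le> deg p + deg q"
proof (rule deg_leI)
  fix c assume "c \<in> Poly_Mapping.keys (p * q)"
  then obtain a b where "c = a + b" "a \<in> Poly_Mapping.keys p" "b \<in> Poly_Mapping.keys q"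
    using keys_mult[of p q] by auto
  then show "int (mdeg c) \<le> deg p + deg q"
    using mdeg_le_deg[of a p] mdeg_le_deg[of b q] by (simp add: mdeg_add)
qed (use assms in \<open>simp add: deg_def\<close>)

lemma keys_smult_subset:
  "Poly_Mapping.keys (Poly_Mapping.single 0 c * p) \<subseteq> Poly_Mapping.keys p"
  using keys_mult[of "Poly_Mapping.single 0 c" p] by (auto split: if_splits)

lemma deg_monom: "deg (monom a) = int (mdeg a)"
  by (simp add: deg_def monom_def)
     (metis empty_not_insert keys_single keys_zero one_neq_zero)

lemma deg_one: "deg (1::'n::finite mpoly) = 0"
  by (simp add: deg_def mdeg_def)

lemma span_mon_add: "p \<in> span_mon A \<Longrightarrow> q \<in> span_mon A \<Longrightarrow> p + q \<in> span_mon A"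
  using keys_add[of p q] by (auto simp: span_mon_def)

definition bounded_repr :: "'n::finite mpoly set \<Rightarrow> ('n \<Rightarrow>\<^sub>0 nat) set \<Rightarrow> nat \<Rightarrow> 'n mpoly set" where
  "bounded_repr H A k = {p. \<exists>g r. p = (\<Sum>h\<in>H. g h * h) + r \<and> r \<in> span_mon A \<and> deg r \<le> int k \<and>
     (\<forall>h\<in>H. g h \<noteq> 0 \<longrightarrow> deg (g h) + deg h \<le> int k)}"

lemma bounded_reprI:
  "p = (\<Sum>h\<in>H. g h * h) + r \<Longrightarrow> r \<in> span_mon A \<Longrightarrow> deg r \<le> int k \<Longrightarrow>
   (\<And>h. h \<in> H \<Longrightarrow> g h \<noteq> 0 \<Longrightarrow> deg (g h) + deg h \<le> int k) \<Longrightarrow> p \<in> bounded_repr H A k"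
  unfolding bounded_repr_def by blast

lemma bounded_reprE:
  assumes "p \<in> bounded_repr H A k"
  obtains g r where "p = (\<Sum>h\<in>H. g h * h) + r" "r \<in> span_mon A" "deg r \<le> int k"
    "\<And>h. h \<in> H \<Longrightarrow> g h \<noteq> 0 \<Longrightarrow> deg (g h) + deg h \<le> int k"
  using assms unfolding bounded_repr_def by blast

lemma bounded_repr_mono: "p \<in> bounded_repr H A k \<Longrightarrow> k \<le> m \<Longrightarrow> p \<in> bounded_repr H A m"
  by (elim bounded_reprE, rule bounded_reprI) force+

lemma zero_in_bounded_repr: "0 \<in> bounded_repr H A k"
  by (rule bounded_reprI[where g = "\<lambda>_. 0" and r = 0]) (simp_all add: span_mon_def deg_def)

lemma bounded_repr_add:
  assumes "p \<in> bounded_repr H A k" "q \<in> bounded_repr H A k"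
  shows "p + q \<in> bounded_repr H A k"
proof -
  obtain g1 r1 where p: "p = (\<Sum>h\<in>H. g1 h * h) + r1" "r1 \<in> span_mon A" "deg r1 \<le> int k"
    and g1: "\<And>h. h \<in> H \<Longrightarrow> g1 h \<noteq> 0 \<Longrightarrow> deg (g1 h) + deg h \<le> int k"
    using assms(1) by (rule bounded_reprE) blast
  obtain g2 r2 where q: "q = (\<Sum>h\<in>H. g2 h * h) + r2" "r2 \<in> span_mon A" "deg r2 \<le> int k"
    and g2: "\<And>h. h \<in> H \<Longrightarrow> g2 h \<noteq> 0 \<Longrightarrow> deg (g2 h) + deg h \<le> int k"
    using assms(2) by (rule bounded_reprE) blast
  show ?thesis
  proof (rule bounded_reprI[where g = "\<lambda>h. g1 h + g2 h" and r = "r1 + r2"])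
    show "p + q = (\<Sum>h\<in>H. (g1 h + g2 h) * h) + (r1 + r2)"
      using p q by (simp add: distrib_right sum.distrib)
    fix h assume h: "h \<in> H" "g1 h + g2 h \<noteq> 0"
    show "deg (g1 h + g2 h) + deg h \<le> int k"
    proof (cases "g1 h = 0 \<or> g2 h = 0")
      case False
      then have "deg (g1 h) \<le> int k - deg h" "deg (g2 h) \<le> int k - deg h"
        using g1 g2 h by force+
      then have "deg (g1 h + g2 h) \<le> int k - deg h" by (rule deg_add_le)
      then show ?thesis by simp
    qed (use g1 g2 h in auto)
  qed (use p q in \<open>auto intro: span_mon_add deg_add_le\<close>)
qed

lemma bounded_repr_sum:
  "(\<And>i. i \<in> I \<Longrightarrow> f i \<in> bounded_repr H A k) \<Longrightarrow> sum f I \<in> bounded_repr H A k"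
  by (induction I rule: infinite_finite_induct) (auto intro: zero_in_bounded_repr bounded_repr_add)

lemma bounded_repr_smult:
  assumes "p \<in> bounded_repr H A k"
  shows "Poly_Mapping.single 0 c * p \<in> bounded_repr H A k"
proof -
  let ?c = "Poly_Mapping.single 0 c"
  obtain g r where p: "p = (\<Sum>h\<in>H. g h * h) + r" "r \<in> span_mon A" "deg r \<le> int k"
    and g: "\<And>h. h \<in> H \<Longrightarrow> g h \<noteq> 0 \<Longrightarrow> deg (g h) + deg h \<le> int k"
    using assms by (rule bounded_reprE) blast
  show ?thesis
  proof (rule bounded_reprI[where g = "\<lambda>h. ?c * g h" and r = "?c * r"])
    fix h assume "h \<in> H" "?c * g h \<noteq> 0"
    then show "deg (?c * g h) + deg h \<le> int k"
      using g deg_mono_keys[OF keys_smult_subset[of c "g h"]] by force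
  qed (use p keys_smult_subset[of c r] deg_mono_keys[OF keys_smult_subset[of c r]] in
       \<open>auto simp: span_mon_def distrib_left sum_distrib_left mult.assoc\<close>)
qed

lemma bounded_repr_times_var:
  fixes p :: "'n::finite mpoly"
  assumes "p \<in> bounded_repr H A k"
    and step: "\<And>\<gamma>. \<gamma> \<in> A \<Longrightarrow> mdeg \<gamma> \<le> k \<Longrightarrow>
      monom (Poly_Mapping.single j 1 + \<gamma>) \<in> bounded_repr H A (Suc k)"
  shows "monom (Poly_Mapping.single j 1) * p \<in> bounded_repr H A (Suc k)"
proof -
  let ?x = "monom (Poly_Mapping.single j 1) :: 'n mpoly"
  have deg_x: "deg ?x = 1" by (simp add: deg_monom)
  obtain g r where p: "p = (\<Sum>h\<in>H. g h * h) + r" "r \<in> span_mon A" "deg r \<le> int k"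
    and g: "\<And>h. h \<in> H \<Longrightarrow> g h \<noteq> 0 \<Longrightarrow> deg (g h) + deg h \<le> int k"
    using assms(1) by (rule bounded_reprE) blast
  have "(\<Sum>h\<in>H. (?x * g h) * h) + 0 \<in> bounded_repr H A (Suc k)"
  proof (rule bounded_reprI[where r = 0])
    fix h assume h: "h \<in> H" "?x * g h \<noteq> 0"
    then have "g h \<noteq> 0" "?x \<noteq> 0" by auto
    then show "deg (?x * g h) + deg h \<le> int (Suc k)"
      using deg_mult_le[of ?x "g h"] g[OF h(1)] deg_x by linarith
  qed (simp_all add: span_mon_def deg_def)
  moreover have "?x * r \<in> bounded_repr H A (Suc k)"
  proof -
    have "?x * r = (\<Sum>a\<in>Poly_Mapping.keys r.
        Poly_Mapping.single 0 (Poly_Mapping.lookup r a) * monom (Poly_Mapping.single j 1 + a))"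
      by (subst (1) sum_single_lookup[symmetric])
         (simp add: sum_distrib_left monom_def mult_single add.commute)
    also have "\<dots> \<in> bounded_repr H A (Suc k)"
    proof (intro bounded_repr_sum bounded_repr_smult step)
      fix a assume a: "a \<in> Poly_Mapping.keys r"
      then show "a \<in> A" using p(2) by (auto simp: span_mon_def)
      show "mdeg a \<le> k" using mdeg_le_deg[OF a] p(3) by simp
    qed
    finally show ?thesis .
  qed
  ultimately have "((\<Sum>h\<in>H. (?x * g h) * h) + 0) + ?x * r \<in> bounded_repr H A (Suc k)"
    by (rule bounded_repr_add)
  then show ?thesis
    using p(1) by (simp add: distrib_left sum_distrib_left mult.assoc)
qed

lemma monom_in_bounded_repr:
  assumes one: "1 \<in> bounded_repr H A 0"
    and step: "\<And>j \<gamma> k. \<gamma> \<in> A \<Longrightarrow> mdeg \<gamma> \<le> k \<Longrightarrow>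
      monom (Poly_Mapping.single j 1 + \<gamma>) \<in> bounded_repr H A (Suc k)"
  shows "monom a \<in> bounded_repr H A (mdeg a)"
proof (induction "mdeg a" arbitrary: a)
  case 0
  then show ?case using one by (simp add: mdeg_eq_0_iff monom_def)
next
  case (Suc n)
  then obtain j where j: "Poly_Mapping.lookup a j \<noteq> 0"
    by (metis mdeg_eq_0_iff lookup_zero nat.simps(3) poly_mapping_eqI)
  define a' where "a' = a - Poly_Mapping.single j 1"
  have a: "a = Poly_Mapping.single j 1 + a'"
    by (rule poly_mapping_eqI) (use j in \<open>auto simp: a'_def lookup_add lookup_minus lookup_single when_def\<close>)
  then have "mdeg a' = n" using Suc.hyps(2) by (simp add: mdeg_add)
  then have "monom (Poly_Mapping.single j 1) * monom a' \<in> bounded_repr H A (Suc n)"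
    using Suc.hyps(1) by (intro bounded_repr_times_var step) auto
  then show ?case using a Suc.hyps(2) by (simp add: monom_def mult_single)
qed

lemma in_bounded_repr_deg:
  assumes "q \<noteq> 0"
    and "1 \<in> bounded_repr H A 0"
    and "\<And>j \<gamma> k. \<gamma> \<in> A \<Longrightarrow> mdeg \<gamma> \<le> k \<Longrightarrow>
      monom (Poly_Mapping.single j 1 + \<gamma>) \<in> bounded_repr H A (Suc k)"
  shows "q \<in> bounded_repr H A (nat (deg q))"
proof -
  have "(\<Sum>a\<in>Poly_Mapping.keys q. Poly_Mapping.single 0 (Poly_Mapping.lookup q a) * monom a)
      \<in> bounded_repr H A (nat (deg q))"
  proof (intro bounded_repr_sum bounded_repr_smult)
    fix a assume "a \<in> Poly_Mapping.keys q"
    then have "mdeg a \<le> nat (deg q)" using mdeg_le_deg[of a q] by linarith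
    then show "monom a \<in> bounded_repr H A (nat (deg q))"
      using monom_in_bounded_repr[OF assms(2,3)] bounded_repr_mono by blast
  qed
  then show ?thesis
    by (simp add: monom_def mult_single sum_single_lookup)
qed

locale degree_reducing_interpolation =
  fixes X :: "('n::finite \<Rightarrow> complex) set" and A :: "('n \<Rightarrow>\<^sub>0 nat) set"
  assumes X_nonempty: "X \<noteq> {}" and A_finite: "finite A"
    and deg_reducing: "deg_reducing_interp_space (span_mon A) X"
begin

abbreviation L :: "'n mpoly \<Rightarrow> 'n mpoly" where
  "L \<equiv> interp_op A X"

definition border_poly :: "('n \<Rightarrow>\<^sub>0 nat) \<Rightarrow> 'n mpoly" where
  "border_poly \<beta> = monom \<beta> - L (monom \<beta>)"

lemma interp_op_in_span: "L q \<in> span_mon A" and interpolates_interp_op: "interpolates (L q) q X"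
proof -
  have "\<exists>!p. p \<in> span_mon A \<and> interpolates p q X"
    using deg_reducing by (simp add: deg_reducing_interp_space_def)
  then have "L q \<in> span_mon A \<and> interpolates (L q) q X"
    unfolding interp_op_def by (rule theI')
  then show "L q \<in> span_mon A" "interpolates (L q) q X" by auto
qed

lemma deg_interp_op_le: "deg (L q) \<le> deg q"
  using deg_reducing interp_op_in_span interpolates_interp_op
  by (simp add: deg_reducing_interp_space_def)

lemma span_mon_vanishing_eq_0: "p \<in> span_mon A \<Longrightarrow> \<forall>x\<in>X. eval p x = 0 \<Longrightarrow> p = 0"
  using deg_reducing unfolding deg_reducing_interp_space_def interpolates_def
  by (metis (no_types, lifting) eval_zero keys_zero empty_subsetI mem_Collect_eq span_mon_def)

text \<open>The only place where X \<noteq> {} is needed: it forces the constant L 1 to be 1.\<close>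

lemma interp_op_one: "L 1 = 1"
proof -
  have "a = 0" if "a \<in> Poly_Mapping.keys (L 1)" for a
  proof -
    have "int (mdeg a) \<le> 0"
      using mdeg_le_deg[OF that] deg_interp_op_le[of 1] by (simp add: deg_one)
    then show ?thesis by (simp add: mdeg_eq_0_iff)
  qed
  then have L1: "L 1 = Poly_Mapping.single 0 (Poly_Mapping.lookup (L 1) 0)"
    by (intro poly_mapping_eqI) (metis in_keys_iff lookup_single_eq lookup_single_not_eq)
  obtain x where "x \<in> X" using X_nonempty by auto
  then have "eval (L 1) x = 1"
    using interpolates_interp_op[of 1] by (simp add: interpolates_def eval_one)
  then have "Poly_Mapping.lookup (L 1) 0 = 1"
    by (subst (asm) L1) (simp add: eval_single powprod_def)
  then show ?thesis using L1 by simp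
qed

lemma border_poly_vanishing: "border_poly \<beta> \<in> vanishing_ideal X"
  using interpolates_interp_op[of "monom \<beta>"]
  by (simp add: border_poly_def vanishing_ideal_def eval_diff interpolates_def)

lemma deg_border_poly_le: "deg (border_poly \<beta>) \<le> int (mdeg \<beta>)"
  unfolding border_poly_def diff_conv_add_uminus
  using deg_interp_op_le[of "monom \<beta>"] deg_mono_keys[of "- L (monom \<beta>)" "L (monom \<beta>)"]
  by (intro deg_add_le) (auto simp: deg_monom)

abbreviation border_polys :: "'n mpoly set" where
  "border_polys \<equiv> border_poly ` border A"

lemma finite_border_polys: "finite border_polys"
  using A_finite by (simp add: border_def)

lemma one_in_bounded_repr: "1 \<in> bounded_repr border_polys A 0"
proof (rule bounded_reprI[where g = "\<lambda>_. 0" and r = 1])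
  show "1 \<in> span_mon A" using interp_op_in_span[of 1] by (simp add: interp_op_one)
qed (simp_all add: deg_one)

lemma border_monom_in_bounded_repr:
  assumes \<beta>: "\<beta> \<in> border A" "mdeg \<beta> \<le> k"
  shows "monom \<beta> \<in> bounded_repr border_polys A k"
proof (rule bounded_reprI[where g = "\<lambda>h. if h = border_poly \<beta> then 1 else 0"])
  have "(\<Sum>h\<in>border_polys. (if h = border_poly \<beta> then 1 else 0) * h) =
      (\<Sum>h\<in>border_polys. if h = border_poly \<beta> then h else 0)"
    by (intro sum.cong) auto
  also have "\<dots> = border_poly \<beta>"
    using finite_border_polys \<beta>(1) by simp
  finally have "(\<Sum>h\<in>border_polys. (if h = border_poly \<beta> then 1 else 0) * h) = border_poly \<beta>" .
  then show "monom \<beta> = (\<Sum>h\<in>border_polys. (if h = border_poly \<beta> then 1 else 0) * h) + L (monom \<beta>)"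
    by (simp add: border_poly_def)
qed (use \<beta> deg_interp_op_le[of "monom \<beta>"] deg_border_poly_le[of \<beta>] in
     \<open>auto simp: interp_op_in_span deg_monom deg_one\<close>)

lemma monom_step_in_bounded_repr:
  assumes "\<gamma> \<in> A" "mdeg \<gamma> \<le> k"
  shows "monom (Poly_Mapping.single j 1 + \<gamma>) \<in> bounded_repr border_polys A (Suc k)"
proof (cases "Poly_Mapping.single j 1 + \<gamma> \<in> A")
  case True
  then show ?thesis
    using assms(2) by (intro bounded_reprI[where g = "\<lambda>_. 0"])
      (auto simp: span_mon_def monom_def deg_monom[unfolded monom_def] mdeg_add)
next
  case False
  then have "Poly_Mapping.single j 1 + \<gamma> \<in> border A"
    using assms(1) unfolding border_def by (auto simp: add.commute)
  then show ?thesis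
    using assms(2) by (intro border_monom_in_bounded_repr) (simp_all add: mdeg_add)
qed

lemma is_H_basis_border_polys: "is_H_basis border_polys (vanishing_ideal X)"
  unfolding is_H_basis_def
proof (intro conjI ballI)
  show "finite border_polys" by (rule finite_border_polys)
  show "border_polys \<subseteq> vanishing_ideal X" using border_poly_vanishing by auto
  fix q assume q: "q \<in> vanishing_ideal X"
  show "\<exists>g. q = (\<Sum>h\<in>border_polys. g h * h) \<and> (\<forall>h\<in>border_polys. g h \<noteq> 0 \<longrightarrow> deg (g h) + deg h \<le> deg q)"
  proof (cases "q = 0")
    case False
    have "q \<in> bounded_repr border_polys A (nat (deg q))"
      using False one_in_bounded_repr monom_step_in_bounded_repr by (rule in_bounded_repr_deg)
    then obtain g r where qr: "q = (\<Sum>h\<in>border_polys. g h * h) + r" "r \<in> span_mon A"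
      and g: "\<And>h. h \<in> border_polys \<Longrightarrow> g h \<noteq> 0 \<Longrightarrow> deg (g h) + deg h \<le> int (nat (deg q))"
      by (rule bounded_reprE) blast
    have "\<forall>x\<in>X. eval r x = 0"
    proof
      fix x assume x: "x \<in> X"
      have "eval h x = 0" if "h \<in> border_polys" for h
        using border_poly_vanishing that x by (auto simp: vanishing_ideal_def)
      then have "eval (\<Sum>h\<in>border_polys. g h * h) x = 0" by (simp add: eval_sum eval_mult)
      moreover have "eval q x = 0" using q x by (simp add: vanishing_ideal_def)
      ultimately show "eval r x = 0" using qr(1) by (simp add: eval_add)
    qed
    then have "r = 0" using qr(2) span_mon_vanishing_eq_0 by blast
    moreover have "int (nat (deg q)) = deg q" using False by (simp add: deg_def)
    ultimately show ?thesis using qr g by auto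
  qed (intro exI[of _ "\<lambda>_. 0"], simp)
qed

end

theorem lemma36:
  fixes X :: "('n::finite \<Rightarrow> complex) set" and A :: "('n \<Rightarrow>\<^sub>0 nat) set"
  assumes "finite X" and "X \<noteq> {}" and "finite A"
    and "deg_reducing_interp_space (span_mon A) X"
  shows "is_H_basis ((\<lambda>\<alpha>. monom \<alpha> - interp_op A X (monom \<alpha>)) ` border A) (vanishing_ideal X)"
proof -
  interpret degree_reducing_interpolation X A
    using assms(2-4) by unfold_locales
  show ?thesis
    using is_H_basis_border_polys by (simp add: border_poly_def[abs_def])
qed

end
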